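(* Let $G$ and $K$ be convex bodies in $\mathbb{R}^d$ with $O\in\operatorname{int}(G)$ and $G\subset\operatorname{int}(K)$. Let $\alpha>0$ and $G_+:=\{y\in\operatorname{int}(K):\inf_{g\in G}d_K(y,g)\le\alpha\}$. Then for all $p,x\in K^\circ$, $$d_{(G_+)^\circ}(p,x)\le d_{G^\circ}(p,x)+2\alpha.$$ In particular, if $d_{G^\circ}(p,x)\le\alpha$ then $d_{(G_+)^\circ}(p,x)\le3\alpha$.
   Context: Polar $X^\circ=\{y:\langle w,y\rangle\le1\ \forall w\in X\}$. For a convex body $E$ and distinct $u,v\in\operatorname{int}(E)$, let $v'$ (resp. $u'$) be where the ray from $u$ through $v$ (resp. from $v$ through $u$) meets $\partial E$; the Hilbert distance is $d_E(u,v)=\frac12\ln\left(\frac{\|v-u'\|}{\|u-u'\|}\frac{\|u-v'\|}{\|v-v'\|}\right)$, $d_E(u,u)=0$. *)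

theory Defs
  imports "HOL-Analysis.Analysis"
begin

definition convex_body :: "'a::euclidean_space set \<Rightarrow> bool" where
  "convex_body E \<longleftrightarrow> compact E \<and> convex E \<and> interior E \<noteq> {}"

definition polar :: "'a::euclidean_space set \<Rightarrow> 'a set" where
  "polar X = {y. \<forall>w\<in>X. w \<bullet> y \<le> 1}"

definition ray_boundary :: "'a::euclidean_space set \<Rightarrow> 'a \<Rightarrow> 'a \<Rightarrow> 'a" where
  "ray_boundary E u v = (THE w. w \<in> frontier E \<and> (\<exists>t\<ge>0. w = u + t *\<^sub>R (v - u)))"

text \<open>Hilbert distance (meaningful for u, v in the interior of E).\<close>
definition hilbert_dist :: "'a::euclidean_space set \<Rightarrow> 'a \<Rightarrow> 'a \<Rightarrow> real" where
  "hilbert_dist E u v =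
     (if u = v then 0
      else (let v' = ray_boundary E u v; u' = ray_boundary E v u in
            ln ((norm (v - u') / norm (u - u')) * (norm (u - v') / norm (v - v'))) / 2))"

end

theory Submission
  imports Defs
begin

text \<open>
  If \<open>p \<noteq> x\<close> lie in the interior of a polar body \<open>E\<^sup>\<circ>\<close> and the ray from \<open>p\<close> through \<open>x\<close>
  leaves \<open>E\<^sup>\<circ>\<close> at \<open>p + t (x - p)\<close>, then \<open>t / (t - 1)\<close> is the least \<open>M\<close> with
  \<open>1 - e \<bullet> p \<le> M (1 - e \<bullet> x)\<close> for all \<open>e \<in> E\<close>; the Hilbert distance \<open>d\<^bsub>E\<^sup>\<circ>\<^esub>(p, x)\<close> is half the
  logarithm of the product of this constant and the one with \<open>p\<close>, \<open>x\<close> swapped.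
  On the other hand, for \<open>p, x \<in> K\<^sup>\<circ>\<close> and \<open>a, b\<close> in the interior of \<open>K\<close>, the chord of \<open>K\<close>
  through \<open>a\<close> and \<open>b\<close> gives
  \<open>(1 - a \<bullet> p)(1 - b \<bullet> x) \<le> exp (2 d\<^sub>K(a, b)) (1 - b \<bullet> p)(1 - a \<bullet> x)\<close>.
  So a point of \<open>G\<^sub>+\<close>, which is within \<open>d\<^sub>K\<close>-distance \<open>\<alpha>\<close> of \<open>G\<close>, satisfies every such
  ratio bound of \<open>G\<close> up to a factor \<open>exp (2 \<alpha>)\<close>. Both constants for \<open>G\<^sub>+\<close> exceed those
  for \<open>G\<close> by at most this factor, hence the distance by at most \<open>2 \<alpha>\<close>.
\<close>

lemma inner_affine_le_1_iff:
  fixes w u v :: "'a::real_inner"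
  assumes "t > 1"
  shows "w \<bullet> (u + t *\<^sub>R (v - u)) \<le> 1 \<longleftrightarrow> 1 - w \<bullet> u \<le> t / (t - 1) * (1 - w \<bullet> v)"
proof -
  have "1 - w \<bullet> (u + t *\<^sub>R (v - u)) = (1 - t) * (1 - w \<bullet> u) + t * (1 - w \<bullet> v)"
    by (simp add: inner_add_right inner_diff_right algebra_simps)
  then show ?thesis
    using assms by (simp add: field_simps)
qed

lemma ray_beyond_frontier_not_in_closure:
  fixes C :: "'a::euclidean_space set"
  assumes "convex C" "u \<in> interior C" "u + t *\<^sub>R l \<in> frontier C" "0 < t" "t < \<tau>"
  shows "u + \<tau> *\<^sub>R l \<notin> closure C"
proof
  assume closure: "u + \<tau> *\<^sub>R l \<in> closure C"
  have "l \<noteq> 0" using assms(2,3) by (auto simp: frontier_def)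
  then have "u + t *\<^sub>R l \<in> open_segment u (u + \<tau> *\<^sub>R l)"
    using assms(4,5) unfolding in_segment
    by (intro conjI exI[of _ "t / \<tau>"]) (auto simp: algebra_simps)
  then have "u + t *\<^sub>R l \<in> interior C"
    using in_interior_closure_convex_segment[OF assms(1,2) closure] by blast
  then show False using assms(3) by (auto simp: frontier_def)
qed

lemma ray_boundary_eq:
  fixes C :: "'a::euclidean_space set"
  assumes "convex C" "bounded C" "u \<in> interior C" "v \<in> interior C" "u \<noteq> v"
  obtains t where "t > 1" "ray_boundary C u v = u + t *\<^sub>R (v - u)"
    "u + t *\<^sub>R (v - u) \<in> frontier C" "\<And>\<tau>. \<tau> > t \<Longrightarrow> u + \<tau> *\<^sub>R (v - u) \<notin> closure C"
proof -
  obtain d where d: "0 < d" "u + d *\<^sub>R (v - u) \<in> frontier C"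
     "\<And>e. \<lbrakk>0 \<le> e; e < d\<rbrakk> \<Longrightarrow> u + e *\<^sub>R (v - u) \<in> interior C"
    using ray_to_frontier[OF assms(2,3)] assms(5) by (metis eq_iff_diff_eq_0)
  have beyond: "u + \<tau> *\<^sub>R (v - u) \<notin> closure C" if "\<tau> > d" for \<tau>
    using ray_beyond_frontier_not_in_closure[OF assms(1,3) d(2,1) that] .
  have "d \<noteq> 1" using d(2) assms(4) by (auto simp: frontier_def)
  moreover have "\<not> d < 1"
  proof
    assume "d < 1"
    then have "u + 1 *\<^sub>R (v - u) \<notin> closure C" by (rule beyond)
    then show False using assms(4) interior_subset closure_subset by auto
  qed
  ultimately have "d > 1" by linarith
  moreover have "ray_boundary C u v = u + d *\<^sub>R (v - u)"
    unfolding ray_boundary_def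
  proof (rule the_equality)
    show "u + d *\<^sub>R (v - u) \<in> frontier C \<and> (\<exists>t\<ge>0. u + d *\<^sub>R (v - u) = u + t *\<^sub>R (v - u))"
      using d by (intro conjI exI[of _ d]) auto
  next
    fix w assume w: "w \<in> frontier C \<and> (\<exists>t\<ge>0. w = u + t *\<^sub>R (v - u))"
    then obtain t where t: "t \<ge> 0" "w = u + t *\<^sub>R (v - u)" by blast
    have "\<not> t < d" using d(3)[of t] t w by (auto simp: frontier_def)
    moreover have "\<not> t > d" using beyond t w by (auto simp: frontier_def)
    ultimately show "w = u + d *\<^sub>R (v - u)" using t by simp
  qed
  ultimately show ?thesis using that d(2) beyond by blast
qed

lemma hilbert_dist_exit_params:
  fixes C :: "'a::euclidean_space set"
  assumes "convex C" "bounded C" "u \<in> interior C" "v \<in> interior C" "u \<noteq> v"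
  obtains s t where "s > 1" "t > 1"
    "u + t *\<^sub>R (v - u) \<in> frontier C" "\<And>\<tau>. \<tau> > t \<Longrightarrow> u + \<tau> *\<^sub>R (v - u) \<notin> closure C"
    "v + s *\<^sub>R (u - v) \<in> frontier C" "\<And>\<tau>. \<tau> > s \<Longrightarrow> v + \<tau> *\<^sub>R (u - v) \<notin> closure C"
    "exp (2 * hilbert_dist C u v) = s / (s - 1) * (t / (t - 1))"
proof -
  obtain t where t: "t > 1" "ray_boundary C u v = u + t *\<^sub>R (v - u)"
    "u + t *\<^sub>R (v - u) \<in> frontier C" "\<And>\<tau>. \<tau> > t \<Longrightarrow> u + \<tau> *\<^sub>R (v - u) \<notin> closure C"
    using ray_boundary_eq[OF assms] by blast
  obtain s where s: "s > 1" "ray_boundary C v u = v + s *\<^sub>R (u - v)"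
    "v + s *\<^sub>R (u - v) \<in> frontier C" "\<And>\<tau>. \<tau> > s \<Longrightarrow> v + \<tau> *\<^sub>R (u - v) \<notin> closure C"
    using ray_boundary_eq[OF assms(1,2,4,3)] assms(5) by metis
  have "v - (v + s *\<^sub>R (u - v)) = s *\<^sub>R (v - u)" "u - (v + s *\<^sub>R (u - v)) = (s - 1) *\<^sub>R (v - u)"
    "u - (u + t *\<^sub>R (v - u)) = t *\<^sub>R (u - v)" "v - (u + t *\<^sub>R (v - u)) = (t - 1) *\<^sub>R (u - v)"
    by (simp_all add: algebra_simps)
  \<comment> \<open>with \<open>v' = u + t (v - u)\<close>, the factor \<open>|u - v'| / |v - v'|\<close> of the cross ratio is \<open>t / (t - 1)\<close>\<close>
  then have "norm (v - ray_boundary C v u) = s * norm (u - v)"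
    "norm (u - ray_boundary C v u) = (s - 1) * norm (u - v)"
    "norm (u - ray_boundary C u v) = t * norm (u - v)"
    "norm (v - ray_boundary C u v) = (t - 1) * norm (u - v)"
    using s(1) t(1) by (simp_all add: s(2) t(2) norm_minus_commute[of v u])
  then have "2 * hilbert_dist C u v = ln (s / (s - 1) * (t / (t - 1)))"
    unfolding hilbert_dist_def Let_def using assms(5) by simp
  moreover have "s / (s - 1) * (t / (t - 1)) > 0" using s(1) t(1) by simp
  ultimately have "exp (2 * hilbert_dist C u v) = s / (s - 1) * (t / (t - 1))" by simp
  then show ?thesis using that s(1,3,4) t(1,3,4) by blast
qed

lemma hilbert_dist_nonneg:
  fixes C :: "'a::euclidean_space set"
  assumes "convex C" "bounded C" "u \<in> interior C" "v \<in> interior C"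
  shows "0 \<le> hilbert_dist C u v"
proof (cases "u = v")
  case False
  then obtain s t where "s > 1" "t > 1"
    and exp_dist: "exp (2 * hilbert_dist C u v) = s / (s - 1) * (t / (t - 1))"
    using hilbert_dist_exit_params[OF assms] by metis
  then have "1 * 1 \<le> s / (s - 1) * (t / (t - 1))" by (intro mult_mono) simp_all
  then have "1 \<le> exp (2 * hilbert_dist C u v)" unfolding exp_dist by simp
  then show ?thesis by simp
qed (simp add: hilbert_dist_def)

lemma closed_polar: "closed (polar E)"
  unfolding polar_def by (simp add: Collect_ball_eq closed_INT closed_halfspace_le)

lemma convex_polar: "convex (polar E)"
  unfolding polar_def by (simp add: Collect_ball_eq convex_INT convex_halfspace_le)

lemma polar_antimono: "A \<subseteq> B \<Longrightarrow> polar B \<subseteq> polar A"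
  unfolding polar_def by auto

lemma zero_in_polar: "0 \<in> polar E"
  unfolding polar_def by simp

lemma chord_ratio_le:
  fixes K :: "'a::euclidean_space set"
  assumes "a + t *\<^sub>R (b - a) \<in> K" "p \<in> polar K" "t > 1"
  shows "1 - a \<bullet> p \<le> t / (t - 1) * (1 - b \<bullet> p)"
proof -
  have "(a + t *\<^sub>R (b - a)) \<bullet> p \<le> 1" using assms(1,2) unfolding polar_def by blast
  then have "p \<bullet> (a + t *\<^sub>R (b - a)) \<le> 1" by (simp only: inner_commute)
  then show ?thesis
    unfolding inner_affine_le_1_iff[OF assms(3)] by (simp only: inner_commute)
qed

lemma polar_chord_ratio_le:
  fixes E :: "'a::euclidean_space set"
  assumes "u + t *\<^sub>R (v - u) \<in> polar E" "e \<in> E" "t > 1"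
  shows "1 - e \<bullet> u \<le> t / (t - 1) * (1 - e \<bullet> v)"
proof -
  have "e \<bullet> (u + t *\<^sub>R (v - u)) \<le> 1" using assms(1,2) unfolding polar_def by blast
  then show ?thesis unfolding inner_affine_le_1_iff[OF assms(3)] .
qed

lemma bounded_polar:
  fixes E :: "'a::euclidean_space set"
  assumes "0 \<in> interior E"
  shows "bounded (polar E)"
proof -
  obtain r where r: "r > 0" "ball 0 r \<subseteq> E" using assms by (meson mem_interior)
  have "norm z \<le> 2 / r" if z: "z \<in> polar E" for z
  proof (cases "z = 0")
    case False
    have "(r / 2 / norm z) *\<^sub>R z \<in> E" using r False by auto
    then have "(r / 2 / norm z) *\<^sub>R z \<bullet> z \<le> 1" using z unfolding polar_def by auto
    then have "r / 2 * norm z \<le> 1"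
      using False by (simp add: power2_norm_eq_inner[symmetric] power2_eq_square)
    then show ?thesis using r by (simp add: field_simps)
  qed (use r in simp)
  then show ?thesis unfolding bounded_iff by blast
qed

lemma interior_inner_polar_lt_1:
  fixes K :: "'a::euclidean_space set"
  assumes "g \<in> interior K" "x \<in> polar K"
  shows "g \<bullet> x < 1"
proof (cases "x = 0")
  case False
  obtain e where e: "e > 0" "ball g e \<subseteq> K" using assms(1) by (meson mem_interior)
  have "g + (e / 2 / norm x) *\<^sub>R x \<in> ball g e" using e False by (simp add: dist_norm)
  then have "(g + (e / 2 / norm x) *\<^sub>R x) \<bullet> x \<le> 1"
    using assms(2) e(2) unfolding polar_def by blast
  moreover have "(g + (e / 2 / norm x) *\<^sub>R x) \<bullet> x = g \<bullet> x + e / 2 * norm x" using False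
    by (simp add: inner_add_left power2_norm_eq_inner[symmetric] power2_eq_square)
  moreover have "e / 2 * norm x > 0" using e False by simp
  ultimately show ?thesis by linarith
qed simp

lemma compact_polar_gap:
  fixes G K :: "'a::euclidean_space set"
  assumes "compact G" "G \<subseteq> interior K" "x \<in> polar K"
  obtains c where "c > 0" "\<And>g. g \<in> G \<Longrightarrow> c \<le> 1 - g \<bullet> x"
proof (cases "G = {}")
  case False
  have "continuous_on G (\<lambda>g. 1 - g \<bullet> x)" by (intro continuous_intros)
  then obtain g0 where g0: "g0 \<in> G" "\<And>g. g \<in> G \<Longrightarrow> 1 - g0 \<bullet> x \<le> 1 - g \<bullet> x"
    using continuous_attains_inf[OF assms(1) False] by blast
  have "g0 \<bullet> x < 1" using interior_inner_polar_lt_1 g0(1) assms(2,3) by blast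
  then show ?thesis using that[of "1 - g0 \<bullet> x"] g0(2) by simp
qed (use that[of 1] in auto)

lemma interior_polar_if_gap:
  fixes S :: "'a::euclidean_space set"
  assumes "bounded S" "c > 0" "\<And>y. y \<in> S \<Longrightarrow> c \<le> 1 - y \<bullet> x"
  shows "x \<in> interior (polar S)"
proof -
  obtain R where R: "R > 0" "\<And>y. y \<in> S \<Longrightarrow> norm y \<le> R"
    using assms(1) bounded_pos by metis
  have "ball x (c / R) \<subseteq> polar S"
  proof
    fix z assume z: "z \<in> ball x (c / R)"
    have "y \<bullet> z \<le> 1" if y: "y \<in> S" for y
    proof -
      have "y \<bullet> (z - x) \<le> norm y * norm (z - x)" by (rule norm_cauchy_schwarz)
      also have "\<dots> \<le> R * (c / R)"
        using z R(1) R(2)[OF y] by (intro mult_mono) (auto simp: dist_norm norm_minus_commute)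
      finally show ?thesis using assms(3)[OF y] R(1) by (simp add: inner_diff_right)
    qed
    then show "z \<in> polar S" unfolding polar_def by blast
  qed
  then show ?thesis using assms(2) R(1) by (meson divide_pos_pos mem_interior)
qed

lemma polar_exit_ratio_le:
  fixes F :: "'a::euclidean_space set"
  assumes "v \<in> polar F" "t > 1"
    and "\<And>\<tau>. \<tau> > t \<Longrightarrow> u + \<tau> *\<^sub>R (v - u) \<notin> closure (polar F)"
    and "\<And>f. f \<in> F \<Longrightarrow> 1 - f \<bullet> u \<le> M * (1 - f \<bullet> v)"
  shows "t / (t - 1) \<le> M"
proof (rule ccontr)
  assume "\<not> t / (t - 1) \<le> M"
  moreover have "1 < t / (t - 1)" using assms(2) by simp
  ultimately obtain q where q: "max M 1 < q" "q < t / (t - 1)"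
    using dense by (metis max_less_iff_conj not_le)
  \<comment> \<open>\<open>q \<mapsto> q / (q - 1)\<close> is the inverse of \<open>t \<mapsto> t / (t - 1)\<close> on \<open>(1, \<infinity>)\<close>\<close>
  define \<tau> where "\<tau> = q / (q - 1)"
  have "q > 1" using q(1) by simp
  then have \<tau>: "\<tau> > t" "\<tau> > 1" "\<tau> / (\<tau> - 1) = q"
    using q(2) assms(2) by (auto simp: \<tau>_def field_simps)
  have "u + \<tau> *\<^sub>R (v - u) \<in> polar F"
    unfolding polar_def
  proof (intro CollectI ballI)
    fix f assume f: "f \<in> F"
    have "1 - f \<bullet> u \<le> M * (1 - f \<bullet> v)" using assms(4)[OF f] .
    also have "\<dots> \<le> q * (1 - f \<bullet> v)"
      using q(1) assms(1) f unfolding polar_def by (intro mult_right_mono) auto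
    finally show "f \<bullet> (u + \<tau> *\<^sub>R (v - u)) \<le> 1"
      unfolding inner_affine_le_1_iff[OF \<tau>(2)] \<tau>(3) .
  qed
  then show False using assms(3)[OF \<tau>(1)] closure_subset by blast
qed

lemma hilbert_dist_polar_le:
  fixes E F :: "'a::euclidean_space set"
  assumes "bounded (polar E)" "bounded (polar F)"
    and "p \<in> interior (polar E)" "x \<in> interior (polar E)"
    and "p \<in> interior (polar F)" "x \<in> interior (polar F)"
    and "1 \<le> c"
    and transfer: "\<And>a b M. a \<in> {p, x} \<Longrightarrow> b \<in> {p, x} \<Longrightarrow> \<forall>e\<in>E. 1 - e \<bullet> a \<le> M * (1 - e \<bullet> b)
                     \<Longrightarrow> \<forall>f\<in>F. 1 - f \<bullet> a \<le> c * M * (1 - f \<bullet> b)"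
  shows "hilbert_dist (polar F) p x \<le> hilbert_dist (polar E) p x + ln c"
proof (cases "p = x")
  case False
  have one_sided: "t' / (t' - 1) \<le> c * (t / (t - 1))"
    if ab: "a \<in> {p, x}" "b \<in> {p, x}" and "t > 1" "a + t *\<^sub>R (b - a) \<in> frontier (polar E)"
      and "t' > 1" "\<And>\<tau>. \<tau> > t' \<Longrightarrow> a + \<tau> *\<^sub>R (b - a) \<notin> closure (polar F)"
    for a b t t'
  proof (rule polar_exit_ratio_le)
    have "a + t *\<^sub>R (b - a) \<in> polar E"
      using that(4) frontier_subset_closed[OF closed_polar] by blast
    then have "\<forall>e\<in>E. 1 - e \<bullet> a \<le> t / (t - 1) * (1 - e \<bullet> b)"
      using polar_chord_ratio_le that(3) by blast
    then show "\<And>f. f \<in> F \<Longrightarrow> 1 - f \<bullet> a \<le> c * (t / (t - 1)) * (1 - f \<bullet> b)"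
      using transfer[OF ab] by blast
    show "b \<in> polar F" using ab assms(5,6) interior_subset by blast
  qed (use that in auto)
  obtain s t where st: "s > 1" "t > 1" "p + t *\<^sub>R (x - p) \<in> frontier (polar E)"
      "x + s *\<^sub>R (p - x) \<in> frontier (polar E)"
      and exp_E: "exp (2 * hilbert_dist (polar E) p x) = s / (s - 1) * (t / (t - 1))"
    using hilbert_dist_exit_params[OF convex_polar assms(1,3,4) False] by metis
  obtain s' t' where st': "s' > 1" "t' > 1"
      "\<And>\<tau>. \<tau> > t' \<Longrightarrow> p + \<tau> *\<^sub>R (x - p) \<notin> closure (polar F)"
      "\<And>\<tau>. \<tau> > s' \<Longrightarrow> x + \<tau> *\<^sub>R (p - x) \<notin> closure (polar F)"
      and exp_F: "exp (2 * hilbert_dist (polar F) p x) = s' / (s' - 1) * (t' / (t' - 1))"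
    using hilbert_dist_exit_params[OF convex_polar assms(2,5,6) False] by metis
  have "s' / (s' - 1) * (t' / (t' - 1)) \<le> (c * (s / (s - 1))) * (c * (t / (t - 1)))"
    using one_sided[of x p s s'] one_sided[of p x t t'] st st' assms(7) by (intro mult_mono) auto
  also have "\<dots> = exp (2 * hilbert_dist (polar E) p x) * exp (ln c) * exp (ln c)"
    using assms(7) by (simp add: exp_E)
  also have "\<dots> = exp (2 * (hilbert_dist (polar E) p x + ln c))"
    by (simp only: distrib_left mult_2 exp_add)
  finally have "exp (2 * hilbert_dist (polar F) p x) \<le> exp (2 * (hilbert_dist (polar E) p x + ln c))"
    unfolding exp_F .
  then show ?thesis by simp
qed (use assms(7) in \<open>simp add: hilbert_dist_def\<close>)

lemma hilbert_dist_cross_ratio_le: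
  fixes K :: "'a::euclidean_space set"
  assumes "convex K" "compact K" "a \<in> interior K" "b \<in> interior K" "p \<in> polar K" "x \<in> polar K"
  shows "(1 - a \<bullet> p) * (1 - b \<bullet> x) \<le> exp (2 * hilbert_dist K a b) * ((1 - b \<bullet> p) * (1 - a \<bullet> x))"
proof (cases "a = b")
  case False
  obtain s t where st: "s > 1" "t > 1"
      "a + t *\<^sub>R (b - a) \<in> frontier K" "b + s *\<^sub>R (a - b) \<in> frontier K"
    and exp_dist: "exp (2 * hilbert_dist K a b) = s / (s - 1) * (t / (t - 1))"
    using hilbert_dist_exit_params[OF assms(1) compact_imp_bounded[OF assms(2)] assms(3,4) False]
    by metis
  have "frontier K \<subseteq> K" using assms(2) by (simp add: compact_imp_closed frontier_subset_closed)
  then have ratios: "1 - a \<bullet> p \<le> t / (t - 1) * (1 - b \<bullet> p)"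
    "1 - b \<bullet> x \<le> s / (s - 1) * (1 - a \<bullet> x)"
    using chord_ratio_le st assms(5,6) by blast+
  have "a \<in> K" "b \<in> K" using assms(3,4) interior_subset by auto
  then have "0 \<le> 1 - a \<bullet> p" "0 \<le> 1 - b \<bullet> x" "0 \<le> 1 - b \<bullet> p"
    using assms(5,6) unfolding polar_def by auto
  then have "(1 - a \<bullet> p) * (1 - b \<bullet> x)
      \<le> (t / (t - 1) * (1 - b \<bullet> p)) * (s / (s - 1) * (1 - a \<bullet> x))"
    using ratios st(2) by (intro mult_mono) auto
  then show ?thesis by (simp add: exp_dist ac_simps)
qed (simp add: hilbert_dist_def ac_simps)

lemma le_exp_mul_if_INF_le:
  fixes f :: "'a \<Rightarrow> real"
  assumes "G \<noteq> {}" "B \<ge> 0" "(INF g\<in>G. f g) \<le> \<beta>"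
    and "\<And>g. g \<in> G \<Longrightarrow> A \<le> exp (2 * f g) * B"
  shows "A \<le> exp (2 * \<beta>) * B"
proof (cases "A > 0")
  case False
  then show ?thesis using assms(2) by (meson exp_ge_zero mult_nonneg_nonneg not_less order_trans)
next
  case True
  obtain g0 where "g0 \<in> G" using assms(1) by blast
  then have "0 < exp (2 * f g0) * B" using assms(4) True by (meson less_le_trans)
  then have B: "B > 0" by (simp add: zero_less_mult_iff)
  define r where "r = ln (A / B) / 2"
  have exp_r: "exp (2 * r) = A / B" using True B by (simp add: r_def)
  have "r \<le> f g" if "g \<in> G" for g
  proof -
    have "exp (2 * r) \<le> exp (2 * f g)"
      using assms(4)[OF that] B by (simp add: exp_r pos_divide_le_eq)
    then show ?thesis by simp
  qed
  then have "r \<le> (INF g\<in>G. f g)"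
    using assms(1) by (intro cINF_greatest) auto
  then have "exp (2 * r) \<le> exp (2 * \<beta>)" using assms(3) by simp
  then show ?thesis
    using B by (simp add: exp_r pos_divide_le_eq)
qed

definition hilbert_neighbourhood :: "'a::euclidean_space set \<Rightarrow> 'a set \<Rightarrow> real \<Rightarrow> 'a set" where
  "hilbert_neighbourhood K G \<alpha> = {y \<in> interior K. (INF g\<in>G. hilbert_dist K y g) \<le> \<alpha>}"

lemma subset_hilbert_neighbourhood:
  fixes K G :: "'a::euclidean_space set"
  assumes "convex K" "bounded K" "G \<subseteq> interior K" "0 \<le> \<alpha>"
  shows "G \<subseteq> hilbert_neighbourhood K G \<alpha>"
proof
  fix g assume g: "g \<in> G"
  have "bdd_below ((\<lambda>g'. hilbert_dist K g g') ` G)"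
    using hilbert_dist_nonneg[OF assms(1,2)] g assms(3) by (intro bdd_belowI[of _ 0]) auto
  then have "(INF g'\<in>G. hilbert_dist K g g') \<le> hilbert_dist K g g"
    using g by (rule cINF_lower)
  then show "g \<in> hilbert_neighbourhood K G \<alpha>"
    using g assms(3,4) by (auto simp: hilbert_neighbourhood_def hilbert_dist_def)
qed

lemma hilbert_neighbourhood_ratio_le:
  fixes K G :: "'a::euclidean_space set"
  assumes "convex K" "compact K" "G \<subseteq> interior K" "G \<noteq> {}"
    and "y \<in> hilbert_neighbourhood K G \<alpha>"
    and "p \<in> polar K" "x \<in> polar K" "\<forall>g\<in>G. 1 - g \<bullet> p \<le> M * (1 - g \<bullet> x)"
  shows "1 - y \<bullet> p \<le> exp (2 * \<alpha>) * M * (1 - y \<bullet> x)"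
proof -
  have y: "y \<in> interior K" "(INF g\<in>G. hilbert_dist K y g) \<le> \<alpha>"
    using assms(5) by (auto simp: hilbert_neighbourhood_def)
  have gap: "0 < 1 - g \<bullet> x" if "g \<in> G" for g
    using interior_inner_polar_lt_1 that assms(3,7) by fastforce
  have nonneg: "0 \<le> 1 - z \<bullet> q" if "z \<in> interior K" "q \<in> polar K" for z q
    using that interior_subset unfolding polar_def by fastforce
  obtain g0 where "g0 \<in> G" using assms(4) by blast
  then have "0 \<le> M * (1 - g0 \<bullet> x)"
    using nonneg[of g0 p] assms(3,6,8) by fastforce
  then have "0 \<le> M" using gap[OF \<open>g0 \<in> G\<close>] by (simp add: zero_le_mult_iff)
  then have B: "0 \<le> M * (1 - y \<bullet> x)" using nonneg[OF y(1) assms(7)] by simp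
  have "1 - y \<bullet> p \<le> exp (2 * hilbert_dist K y g) * (M * (1 - y \<bullet> x))" if g: "g \<in> G" for g
  proof -
    have gK: "g \<in> interior K" using g assms(3) by blast
    have "(1 - y \<bullet> p) * (1 - g \<bullet> x)
        \<le> exp (2 * hilbert_dist K y g) * ((1 - g \<bullet> p) * (1 - y \<bullet> x))"
      using hilbert_dist_cross_ratio_le[OF assms(1,2) y(1) gK assms(6,7)] .
    also have "\<dots> \<le> exp (2 * hilbert_dist K y g) * ((M * (1 - g \<bullet> x)) * (1 - y \<bullet> x))"
      using assms(8) g nonneg[OF y(1) assms(7)] by (intro mult_left_mono mult_right_mono) auto
    also have "\<dots> = (exp (2 * hilbert_dist K y g) * (M * (1 - y \<bullet> x))) * (1 - g \<bullet> x)"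
      by (simp add: ac_simps)
    finally show ?thesis using gap[OF g] by simp
  qed
  then have "1 - y \<bullet> p \<le> exp (2 * \<alpha>) * (M * (1 - y \<bullet> x))"
    using le_exp_mul_if_INF_le[OF assms(4) B y(2)] by blast
  then show ?thesis by (simp add: ac_simps)
qed

lemma polar_subset_interior_polar_hilbert_neighbourhood:
  fixes K G :: "'a::euclidean_space set"
  assumes "convex K" "compact K" "compact G" "G \<subseteq> interior K" "G \<noteq> {}"
  shows "polar K \<subseteq> interior (polar (hilbert_neighbourhood K G \<alpha>))"
proof
  fix x assume x: "x \<in> polar K"
  obtain c where c: "c > 0" "\<And>g. g \<in> G \<Longrightarrow> c \<le> 1 - g \<bullet> x"
    using compact_polar_gap[OF assms(3,4) x] by blast
  have "c / exp (2 * \<alpha>) \<le> 1 - y \<bullet> x" if y: "y \<in> hilbert_neighbourhood K G \<alpha>" for y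
  proof -
    have "\<forall>g\<in>G. 1 - g \<bullet> 0 \<le> 1 / c * (1 - g \<bullet> x)"
      using c by (simp add: field_simps)
    then have "1 - y \<bullet> 0 \<le> exp (2 * \<alpha>) * (1 / c) * (1 - y \<bullet> x)"
      using hilbert_neighbourhood_ratio_le[OF assms(1,2,4,5) y zero_in_polar x] by blast
    then show ?thesis using c(1) by (simp add: field_simps)
  qed
  moreover have "bounded (hilbert_neighbourhood K G \<alpha>)"
    using compact_imp_bounded[OF assms(2)] interior_subset[of K]
    by (auto simp: hilbert_neighbourhood_def intro: bounded_subset)
  ultimately show "x \<in> interior (polar (hilbert_neighbourhood K G \<alpha>))"
    using c(1) by (intro interior_polar_if_gap[where c = "c / exp (2 * \<alpha>)"]) auto
qed

theorem lemma4p4: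
  fixes G K :: "'a::euclidean_space set" and \<alpha> :: real
  assumes "convex_body G" and "convex_body K"
    and "0 \<in> interior G" and "G \<subseteq> interior K"
    and "\<alpha> > 0"
  defines "Gp \<equiv> {y \<in> interior K. (INF g\<in>G. hilbert_dist K y g) \<le> \<alpha>}"
  shows "\<forall>p\<in>polar K. \<forall>x\<in>polar K.
           hilbert_dist (polar Gp) p x \<le> hilbert_dist (polar G) p x + 2 * \<alpha>
         \<and> (hilbert_dist (polar G) p x \<le> \<alpha> \<longrightarrow> hilbert_dist (polar Gp) p x \<le> 3 * \<alpha>)"
proof (intro ballI)
  fix p x assume p: "p \<in> polar K" and x: "x \<in> polar K"
  have G: "compact G" "G \<noteq> {}" and K: "convex K" "compact K"
    using assms(1-3) interior_subset unfolding convex_body_def by auto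
  have Gp: "Gp = hilbert_neighbourhood K G \<alpha>"
    unfolding Gp_def hilbert_neighbourhood_def ..
  have "G \<subseteq> Gp"
    using subset_hilbert_neighbourhood[OF K(1) compact_imp_bounded[OF K(2)] assms(4)] assms(5)
    unfolding Gp by simp
  moreover have int_Gp: "polar K \<subseteq> interior (polar Gp)"
    unfolding Gp using polar_subset_interior_polar_hilbert_neighbourhood[OF K G(1) assms(4) G(2)] .
  ultimately have int_G: "polar K \<subseteq> interior (polar G)"
    using interior_mono[OF polar_antimono] by blast
  have bounded: "bounded (polar G)" "bounded (polar Gp)"
    using bounded_polar[OF assms(3)] polar_antimono[OF \<open>G \<subseteq> Gp\<close>] bounded_subset by auto
  have "hilbert_dist (polar Gp) p x \<le> hilbert_dist (polar G) p x + ln (exp (2 * \<alpha>))"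
  proof (rule hilbert_dist_polar_le[OF bounded])
    show "p \<in> interior (polar G)" "x \<in> interior (polar G)"
      and "p \<in> interior (polar Gp)" "x \<in> interior (polar Gp)"
      using p x int_G int_Gp by auto
    show "1 \<le> exp (2 * \<alpha>)" using assms(5) by simp
    show "\<forall>y\<in>Gp. 1 - y \<bullet> a \<le> exp (2 * \<alpha>) * M * (1 - y \<bullet> b)"
      if "a \<in> {p, x}" "b \<in> {p, x}" "\<forall>g\<in>G. 1 - g \<bullet> a \<le> M * (1 - g \<bullet> b)" for a b M
      using hilbert_neighbourhood_ratio_le[OF K assms(4) G(2) _ _ _ that(3)] that(1,2) p x
      unfolding Gp by blast
  qed
  then show "hilbert_dist (polar Gp) p x \<le> hilbert_dist (polar G) p x + 2 * \<alpha>
         \<and> (hilbert_dist (polar G) p x \<le> \<alpha> \<longrightarrow> hilbert_dist (polar Gp) p x \<le> 3 * \<alpha>)"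
    by simp
qed

end
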